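(* Let $t\ge1$, $w\in\mathbb{R}^t_{++}$, $\rho>0$, and let $\partial_{\rm HS}\mathrm{Prox}_{\rho\|w\circ\cdot\|_1^2}:\mathbb{R}^t\rightrightarrows\mathbb{R}^{t\times t}$ be the multifunction defined in the context. Then $\partial_{\rm HS}\mathrm{Prox}_{\rho\|w\circ\cdot\|_1^2}$ is a nonempty, compact valued and upper-semicontinuous multifunction; for every $a\in\mathbb{R}^t$ all elements of $\partial_{\rm HS}\mathrm{Prox}_{\rho\|w\circ\cdot\|_1^2}(a)$ are symmetric and positive semidefinite; and $\mathrm{Prox}_{\rho\|w\circ\cdot\|_1^2}(\cdot)$ is strongly semismooth with respect to $\partial_{\rm HS}\mathrm{Prox}_{\rho\|w\circ\cdot\|_1^2}(\cdot)$.
   Context: $\mathrm{Prox}_{\rho\|w\circ\cdot\|_1^2}(a):=\arg\min_z\{\frac12\|z-a\|^2+\rho\|w\circ z\|_1^2\}$, $\circ$ the Hadamard product. Let $Q:=I_t+2\rho ww^T$. For $a\in\mathbb{R}^t$ let $x(a):=\arg\min_{x\in\mathbb{R}^t}\{\frac12\langle x,Qx\rangle-\langle x,a\rangle\mid x\ge0\}$ and let $\mu(a)$ be the (unique) multiplier with $Qx(a)-a+\mu(a)=0$, $\mu(a)\circ x(a)=0$, $\mu(a)\le0$. Let $I(a):=\{i\mid x(a)_i=0\}$, $\mathcal{K}(a):=\{K\subseteq\{1,\dots,t\}\mid \mathrm{supp}(\mu(a))\subseteq K\subseteq I(a)\}$, where $\mathrm{supp}(\mu)=\{i:\mu_i\ne0\}$,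 and let $I_K$ be the matrix of rows of $I_t$ indexed by $K$. Define $\widehat\partial_{\rm HS}x(a)$ to be: $\{Q^{-1}\}$ if $Q^{-1}a>0$ (entrywise); $\{Q^{-1}-Q^{-1}I_K^T(I_KQ^{-1}I_K^T)^{-1}I_KQ^{-1}\mid K\in\mathcal{K}(a)\}$ if $(Q^{-1}a)_i<0$ for some $i$; and $\{Q^{-1}\}\cup\{Q^{-1}-Q^{-1}I_K^T(I_KQ^{-1}I_K^T)^{-1}I_KQ^{-1}\mid K\in\mathcal{K}(a)\}$ otherwise. Let $\mathrm{SGN}(z):=\{u\in\mathbb{R}^t: u_j=\mathrm{sign}(z_j)\text{ if }z_j\ne0,\ u_j\in[-1,1]\text{ if }z_j=0\}$. Then $\partial_{\rm HS}\mathrm{Prox}_{\rho\|w\circ\cdot\|_1^2}(a):=\{\mathrm{Diag}(\theta)P\,\mathrm{Diag}(\theta)\mid\theta\in\mathrm{SGN}(a),\ P\in\widehat\partial_{\rm HS}x(|a|)\}$. A locally Lipschitz $F$ is strongly semismooth at $a$ with respect to a multifunction $\mathcal{J}$ if $F$ is directionally differentiable at $a$ and $\|F(a')-F(a)-M(a'-a)\|=O(\|a'-a\|^2)$ as $a'\to a$, uniformly over $M\in\mathcal{J}(a')$; strongly semismooth means at every point. *)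

theory Defs
  imports "HOL-Analysis.Analysis"
begin

text \<open>Vectors in R^t are modelled as real^'n (t = CARD('n) \<ge> 1), t x t matrices as real^'n^'n.\<close>

definition wl1sq :: "real^'n \<Rightarrow> real^'n \<Rightarrow> real" where
  "wl1sq w z = (\<Sum>i\<in>UNIV. \<bar>w$i * z$i\<bar>)^2"

definition prox :: "real \<Rightarrow> real^'n \<Rightarrow> real^'n \<Rightarrow> real^'n" where
  "prox \<rho> w a = (THE z. \<forall>y. (1/2) * (norm (z - a))^2 + \<rho> * wl1sq w z
                              \<le> (1/2) * (norm (y - a))^2 + \<rho> * wl1sq w y)"

definition Qmat :: "real \<Rightarrow> real^'n \<Rightarrow> real^'n^'n" where
  "Qmat \<rho> w = mat 1 + (2 * \<rho>) *\<^sub>R (\<chi> i j. w$i * w$j)"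

definition Qinv :: "real \<Rightarrow> real^'n \<Rightarrow> real^'n^'n" where
  "Qinv \<rho> w = matrix_inv (Qmat \<rho> w)"

definition qobj :: "real \<Rightarrow> real^'n \<Rightarrow> real^'n \<Rightarrow> real^'n \<Rightarrow> real" where
  "qobj \<rho> w a x = (1/2) * (x \<bullet> (Qmat \<rho> w *v x)) - x \<bullet> a"

definition xsol :: "real \<Rightarrow> real^'n \<Rightarrow> real^'n \<Rightarrow> real^'n" where
  "xsol \<rho> w a = (THE x. (\<forall>i. 0 \<le> x$i) \<and>
      (\<forall>y. (\<forall>i. 0 \<le> y$i) \<longrightarrow> qobj \<rho> w a x \<le> qobj \<rho> w a y))"

definition musol :: "real \<Rightarrow> real^'n \<Rightarrow> real^'n \<Rightarrow> real^'n" where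
  "musol \<rho> w a = (THE \<mu>. Qmat \<rho> w *v xsol \<rho> w a - a + \<mu> = 0 \<and>
      (\<forall>i. \<mu>$i * (xsol \<rho> w a)$i = 0) \<and> (\<forall>i. \<mu>$i \<le> 0))"

definition Iset :: "real \<Rightarrow> real^'n \<Rightarrow> real^'n \<Rightarrow> 'n set" where
  "Iset \<rho> w a = {i. (xsol \<rho> w a)$i = 0}"

definition Kfam :: "real \<Rightarrow> real^'n \<Rightarrow> real^'n \<Rightarrow> 'n set set" where
  "Kfam \<rho> w a = {K. {i. (musol \<rho> w a)$i \<noteq> 0} \<subseteq> K \<and> K \<subseteq> Iset \<rho> w a}"

text \<open>selK K = I_K^T I_K (diagonal 0/1 matrix with ones on K).\<close>
definition selK :: "'n set \<Rightarrow> real^'n^'n" where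
  "selK K = (\<chi> i j. if i = j \<and> i \<in> K then 1 else 0)"

text \<open>padinv K M renders I_K^T (I_K M I_K^T)^{-1} I_K as a t x t matrix:
  the inverse of the principal K-submatrix of M, padded by zeros. Since
  blockdiag(M_KK, I)^{-1} = blockdiag(M_KK^{-1}, I), it is obtained as below.\<close>
definition padinv :: "'n set \<Rightarrow> real^'n^'n \<Rightarrow> real^'n^'n" where
  "padinv K M = matrix_inv (selK K ** M ** selK K + (mat 1 - selK K)) - (mat 1 - selK K)"

definition hatHS :: "real \<Rightarrow> real^'n \<Rightarrow> real^'n \<Rightarrow> (real^'n^'n) set" where
  "hatHS \<rho> w a =
    (let Qi = Qinv \<rho> w;
         S = {Qi - Qi ** padinv K Qi ** Qi | K. K \<in> Kfam \<rho> w a}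
     in if (\<forall>i. (Qi *v a)$i > 0) then {Qi}
        else if (\<exists>i. (Qi *v a)$i < 0) then S
        else insert Qi S)"

definition SGN :: "real^'n \<Rightarrow> (real^'n) set" where
  "SGN z = {u. \<forall>j. (z$j \<noteq> 0 \<longrightarrow> u$j = sgn (z$j)) \<and> (z$j = 0 \<longrightarrow> -1 \<le> u$j \<and> u$j \<le> 1)}"

definition Diag :: "real^'n \<Rightarrow> real^'n^'n" where
  "Diag \<theta> = (\<chi> i j. if i = j then \<theta>$i else 0)"

definition vabs :: "real^'n \<Rightarrow> real^'n" where
  "vabs a = (\<chi> i. \<bar>a$i\<bar>)"

definition dHS :: "real \<Rightarrow> real^'n \<Rightarrow> real^'n \<Rightarrow> (real^'n^'n) set" where
  "dHS \<rho> w a = {Diag \<theta> ** P ** Diag \<theta> | \<theta> P. \<theta> \<in> SGN a \<and> P \<in> hatHS \<rho> w (vabs a)}"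

definition usc_multifun :: "('a::metric_space \<Rightarrow> 'b::topological_space set) \<Rightarrow> bool" where
  "usc_multifun F \<longleftrightarrow> (\<forall>a U. open U \<and> F a \<subseteq> U \<longrightarrow>
      (\<exists>\<delta>>0. \<forall>a'. dist a' a < \<delta> \<longrightarrow> F a' \<subseteq> U))"

definition locally_lipschitz :: "(real^'n \<Rightarrow> real^'m) \<Rightarrow> bool" where
  "locally_lipschitz F \<longleftrightarrow> (\<forall>a. \<exists>\<delta>>0. \<exists>L. \<forall>x\<in>ball a \<delta>. \<forall>y\<in>ball a \<delta>.
      norm (F x - F y) \<le> L * norm (x - y))"

definition dir_differentiable_at :: "(real^'n \<Rightarrow> real^'m) \<Rightarrow> real^'n \<Rightarrow> bool" where
  "dir_differentiable_at F a \<longleftrightarrow> (\<forall>d. \<exists>L.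
      ((\<lambda>\<tau>. (1/\<tau>) *\<^sub>R (F (a + \<tau> *\<^sub>R d) - F a)) \<longlongrightarrow> L) (at_right 0))"

definition strongly_semismooth_at ::
  "(real^'n \<Rightarrow> real^'m) \<Rightarrow> (real^'n \<Rightarrow> (real^'n^'m) set) \<Rightarrow> real^'n \<Rightarrow> bool" where
  "strongly_semismooth_at F J a \<longleftrightarrow> dir_differentiable_at F a \<and>
     (\<exists>C \<delta>. \<delta> > 0 \<and> (\<forall>a'. norm (a' - a) < \<delta> \<longrightarrow> (\<forall>M\<in>J a'.
        norm (F a' - F a - M *v (a' - a)) \<le> C * (norm (a' - a))^2)))"

definition strongly_semismooth ::
  "(real^'n \<Rightarrow> real^'m) \<Rightarrow> (real^'n \<Rightarrow> (real^'n^'m) set) \<Rightarrow> bool" where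
  "strongly_semismooth F J \<longleftrightarrow> locally_lipschitz F \<and> (\<forall>a. strongly_semismooth_at F J a)"

end

theory Submission
  imports Defs
begin

text \<open>Near any point \<open>a\<close> the nonzero signs of \<open>a\<close>, of the solution \<open>x(|a|)\<close> and multiplier
  \<open>\<mu>(|a|)\<close> of the nonnegative QP, and of \<open>Q\<^sup>-\<^sup>1|a|\<close> persist, so \<open>\<partial>\<^sub>H\<^sub>S Prox(a') \<subseteq> \<partial>\<^sub>H\<^sub>S Prox(a)\<close>
  for \<open>a'\<close> near \<open>a\<close>; this is upper semicontinuity. The KKT conditions show that every candidate
  matrix \<open>P\<close> maps \<open>|a|\<close> to \<open>x(|a|)\<close>, and the sign flip \<open>Prox(a) = sgn(a) \<circ> x(|a|)\<close> then gives
  \<open>M a = Prox(a)\<close> for every \<open>M \<in> \<partial>\<^sub>H\<^sub>S Prox(a)\<close>. Together, \<open>Prox(a') - Prox(a) = M (a' - a)\<close>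
  exactly for \<open>M \<in> \<partial>\<^sub>H\<^sub>S Prox(a')\<close> near \<open>a\<close>: the semismoothness error vanishes and the
  difference quotients along rays are eventually constant. Symmetry and semidefiniteness come
  from the Schur complement form of the candidates, compactness from the finiteness of
  the candidate set \<open>hatHS\<close> and the compactness of the sign box \<open>SGN(a)\<close>, and Lipschitz continuity from the
  nonexpansiveness of proximal maps of convex functions.\<close>

section \<open>Symmetric positive definite matrices\<close>

lemma matrix_inv_cancel:
  fixes A :: "real^'n^'n"
  assumes "\<And>v. A *v v = 0 \<Longrightarrow> v = 0"
  shows matrix_inv_cancel_left: "matrix_inv A *v (A *v v) = v"
    and matrix_inv_cancel_right: "A *v (matrix_inv A *v v) = v"
proof -
  have "invertible A"
    using assms matrix_left_invertible_ker invertible_left_inverse by blast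
  then have "matrix_inv A ** A = mat 1 \<and> A ** matrix_inv A = mat 1"
    unfolding invertible_def matrix_inv_def by (metis (mono_tags, lifting) someI_ex)
  then show "matrix_inv A *v (A *v v) = v" "A *v (matrix_inv A *v v) = v"
    by (metis matrix_vector_mul_assoc matrix_vector_mul_lid)+
qed

lemma inner_matrix_vector_sym:
  fixes M :: "real^'n^'n"
  shows "transpose M = M \<Longrightarrow> x \<bullet> (M *v y) = (M *v x) \<bullet> y"
  by (metis dot_lmul_matrix transpose_matrix_vector)

lemma transpose_eq_if_inner_sym:
  fixes M :: "real^'n^'n"
  assumes "\<And>x y. x \<bullet> (M *v y) = (M *v x) \<bullet> y"
  shows "transpose M = M"
proof -
  have "(transpose M *v x) \<bullet> y = (M *v x) \<bullet> y" for x y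
    using assms by (metis dot_lmul_matrix transpose_matrix_vector)
  then have "transpose M *v x = M *v x" for x
    by (metis vector_eq_rdot)
  then show ?thesis
    by (simp add: matrix_eq)
qed

definition positive_definite :: "real^'n^'n \<Rightarrow> bool" where
  "positive_definite M \<longleftrightarrow> transpose M = M \<and> (\<forall>v. v \<noteq> 0 \<longrightarrow> 0 < v \<bullet> (M *v v))"

lemma positive_definite_psd: "positive_definite M \<Longrightarrow> 0 \<le> v \<bullet> (M *v v)"
  unfolding positive_definite_def by (cases "v = 0") (auto simp: less_imp_le)

lemma positive_definite_kernel: "positive_definite M \<Longrightarrow> M *v v = 0 \<Longrightarrow> v = 0"
  unfolding positive_definite_def by force

lemma positive_definite_matrix_inv:
  fixes M :: "real^'n^'n"
  assumes M: "positive_definite M"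
  shows "positive_definite (matrix_inv M)"
  unfolding positive_definite_def
proof (intro conjI allI impI)
  note cancel = matrix_inv_cancel[OF positive_definite_kernel[OF M]]
  have sym: "x \<bullet> (M *v y) = (M *v x) \<bullet> y" for x y
    using M inner_matrix_vector_sym unfolding positive_definite_def by blast
  show "transpose (matrix_inv M) = matrix_inv M"
    by (rule transpose_eq_if_inner_sym) (metis cancel(2) sym)
  fix v :: "real^'n" assume "v \<noteq> 0"
  then have "matrix_inv M *v v \<noteq> 0"
    by (metis cancel(2) matrix_vector_mult_0_right)
  then have "0 < (matrix_inv M *v v) \<bullet> (M *v (matrix_inv M *v v))"
    using M unfolding positive_definite_def by blast
  then show "0 < v \<bullet> (matrix_inv M *v v)"
    by (simp add: cancel(2) inner_commute)
qed

lemma selK_mult: "selK K *v v = (\<chi> i. if i \<in> K then v$i else 0)"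
  by (simp add: selK_def matrix_vector_mult_def vec_eq_iff if_distrib if_distribR cong: if_cong)

lemma transpose_selK [simp]: "transpose (selK K) = selK K"
  by (simp add: selK_def transpose_def vec_eq_iff)

lemma selK_idem [simp]: "selK K *v (selK K *v v) = selK K *v v"
  by (simp add: selK_mult vec_eq_iff)

lemma Diag_mult: "Diag \<theta> *v v = (\<chi> i. \<theta>$i * v$i)"
  by (simp add: Diag_def matrix_vector_mult_def vec_eq_iff if_distrib if_distribR cong: if_cong)

lemma transpose_Diag [simp]: "transpose (Diag \<theta>) = Diag \<theta>"
  by (simp add: Diag_def transpose_def vec_eq_iff)

section \<open>Padded principal inverses\<close>

text \<open>With \<open>padinv K M\<close> standing for \<open>I\<^sub>K\<^sup>T (I\<^sub>K M I\<^sub>K\<^sup>T)\<^sup>-\<^sup>1 I\<^sub>K\<close>, this is the matrix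
  \<open>M - M I\<^sub>K\<^sup>T (I\<^sub>K M I\<^sub>K\<^sup>T)\<^sup>-\<^sup>1 I\<^sub>K M\<close> of \<open>hatHS\<close>, the Schur complement of the block
  \<open>I\<^sub>K M I\<^sub>K\<^sup>T\<close>.\<close>

definition schur_compl :: "'n set \<Rightarrow> real^'n^'n \<Rightarrow> real^'n^'n" where
  "schur_compl K M = M - M ** padinv K M ** M"

lemma schur_compl_mult: "schur_compl K M *v v = M *v v - M *v (padinv K M *v (M *v v))"
  by (simp add: schur_compl_def matrix_vector_mult_diff_rdistrib matrix_vector_mul_assoc
      matrix_mul_assoc)

context
  fixes M :: "real^'n^'n"
  assumes M: "positive_definite M"
begin

private lemma M_sym: "x \<bullet> (M *v y) = (M *v x) \<bullet> y"
  using M inner_matrix_vector_sym unfolding positive_definite_def by blast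

private lemma selK_sym: "x \<bullet> (selK K *v y) = (selK K *v x) \<bullet> y"
  by (simp add: inner_matrix_vector_sym)

lemma selK_positive_definite_kernel:
  assumes "selK K *v (M *v (selK K *v e)) = 0"
  shows "selK K *v e = 0"
proof -
  have "(selK K *v e) \<bullet> (M *v (selK K *v e)) = e \<bullet> (selK K *v (M *v (selK K *v e)))"
    by (simp add: selK_sym)
  then have "(selK K *v e) \<bullet> (M *v (selK K *v e)) = 0"
    using assms by simp
  then show ?thesis
    using M unfolding positive_definite_def by (metis less_irrefl)
qed

lemma padinv_as_selK:
  obtains z where "padinv K M *v v = selK K *v z"
    and "selK K *v (M *v (selK K *v z)) = selK K *v v"
proof -
  let ?S = "selK K"
  define N where "N = ?S ** M ** ?S + (mat 1 - ?S)"
  have N_mult: "N *v e = ?S *v (M *v (?S *v e)) + (e - ?S *v e)" for e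
    by (simp add: N_def matrix_vector_mult_add_rdistrib matrix_vector_mult_diff_rdistrib
        matrix_vector_mul_assoc matrix_mul_assoc)
  have selK_N: "?S *v (N *v e) = ?S *v (M *v (?S *v e))" for e
    by (simp add: N_mult matrix_vector_right_distrib matrix_vector_mult_diff_distrib)
  have N_kernel: "e = 0" if "N *v e = 0" for e
  proof -
    have "?S *v e = 0"
      by (rule selK_positive_definite_kernel) (use selK_N[of e] that in simp)
    then show ?thesis
      using N_mult[of e] that by simp
  qed
  define z where "z = matrix_inv N *v v"
  have Nz: "N *v z = v"
    unfolding z_def by (rule matrix_inv_cancel_right[OF N_kernel])
  then have SMSz: "?S *v (M *v (?S *v z)) = ?S *v v"
    using selK_N[of z] by simp
  have "padinv K M *v v = z - (v - ?S *v v)"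
    by (simp add: padinv_def N_def[symmetric] matrix_vector_mult_diff_rdistrib z_def)
  also have "\<dots> = ?S *v z"
    using N_mult[of z] Nz SMSz by (simp add: algebra_simps)
  finally show ?thesis
    using SMSz that by blast
qed

lemma selK_padinv: "selK K *v (padinv K M *v v) = padinv K M *v v"
proof -
  obtain z where "padinv K M *v v = selK K *v z"
    by (rule padinv_as_selK)
  then show ?thesis
    by simp
qed

lemma selK_mult_padinv: "selK K *v (M *v (padinv K M *v v)) = selK K *v v"
proof -
  obtain z where "padinv K M *v v = selK K *v z" "selK K *v (M *v (selK K *v z)) = selK K *v v"
    by (rule padinv_as_selK)
  then show ?thesis
    by simp
qed

lemma padinv_unique:
  assumes "selK K *v y = y" and "selK K *v (M *v y) = selK K *v v"
  shows "padinv K M *v v = y"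
proof -
  let ?d = "padinv K M *v v - y"
  have "selK K *v (M *v (selK K *v ?d)) = 0"
    using assms selK_padinv selK_mult_padinv
    by (simp add: matrix_vector_mult_diff_distrib)
  then have "selK K *v ?d = 0"
    by (rule selK_positive_definite_kernel)
  then show ?thesis
    using assms(1) selK_padinv by (simp add: matrix_vector_mult_diff_distrib)
qed

lemma transpose_padinv: "transpose (padinv K M) = padinv K M"
proof (rule transpose_eq_if_inner_sym)
  fix x y :: "real^'n"
  let ?S = "selK K" and ?p = "padinv K M *v x" and ?q = "padinv K M *v y"
  have "x \<bullet> ?q = (?S *v (M *v ?p)) \<bullet> ?q"
    by (metis selK_mult_padinv selK_padinv selK_sym)
  also have "\<dots> = ?p \<bullet> (?S *v (M *v ?q))"
    by (metis M_sym selK_padinv selK_sym)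
  also have "\<dots> = ?p \<bullet> y"
    by (metis selK_mult_padinv selK_padinv selK_sym)
  finally show "x \<bullet> ?q = ?p \<bullet> y" .
qed

lemma transpose_schur_compl: "transpose (schur_compl K M) = schur_compl K M"
proof -
  have transpose_diff: "transpose (A - B) = transpose A - transpose B" for A B :: "real^'n^'n"
    by (simp add: transpose_def vec_eq_iff)
  show ?thesis
    using M by (simp add: schur_compl_def positive_definite_def transpose_padinv transpose_diff
        matrix_transpose_mul matrix_mul_assoc)
qed

lemma schur_compl_psd: "0 \<le> v \<bullet> (schur_compl K M *v v)"
proof -
  let ?u = "M *v v"
  let ?y = "padinv K M *v ?u"
  have yMy: "?y \<bullet> (M *v ?y) = ?u \<bullet> ?y"
    by (metis selK_mult_padinv selK_padinv selK_sym inner_commute)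
  have "v \<bullet> (schur_compl K M *v v) = v \<bullet> ?u - ?u \<bullet> ?y"
    by (simp add: schur_compl_def matrix_vector_mult_diff_rdistrib inner_diff_right
        flip: matrix_vector_mul_assoc) (metis M_sym)
  also have "\<dots> = (v - ?y) \<bullet> (M *v (v - ?y))"
    using yMy M_sym[of v ?y]
    by (simp add: matrix_vector_mult_diff_distrib inner_diff_left inner_diff_right inner_commute)
  also have "\<dots> \<ge> 0"
    using M by (rule positive_definite_psd)
  finally show ?thesis .
qed

end

section \<open>Proximal points of convex functions\<close>

lemma convex_on_power2:
  assumes "convex_on S f" and "\<And>x. x \<in> S \<Longrightarrow> 0 \<le> f x"
  shows "convex_on S (\<lambda>x. (f x)^2)"
proof
  show "convex S"
    using assms(1) by (rule convex_on_imp_convex)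
  fix t :: real and x y assume t: "0 < t" "t < 1" and xy: "x \<in> S" "y \<in> S"
  have "(1 - t) *\<^sub>R x + t *\<^sub>R y \<in> S"
    using \<open>convex S\<close> xy t unfolding convex_alt by simp
  then have "(f ((1 - t) *\<^sub>R x + t *\<^sub>R y))^2 \<le> ((1 - t) * f x + t * f y)^2"
    using convex_onD[OF assms(1), of t x y] t xy by (intro power_mono assms(2)) auto
  also have "\<dots> = (1 - t) * (f x)^2 + t * (f y)^2 - t * (1 - t) * (f x - f y)^2"
    by (simp add: power2_eq_square algebra_simps)
  also have "\<dots> \<le> (1 - t) * (f x)^2 + t * (f y)^2"
    using t by simp
  finally show "(f ((1 - t) *\<^sub>R x + t *\<^sub>R y))^2 \<le> (1 - t) * (f x)^2 + t * (f y)^2" .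
qed

definition is_prox :: "('a::real_inner \<Rightarrow> real) \<Rightarrow> 'a \<Rightarrow> 'a \<Rightarrow> bool" where
  "is_prox g a z \<longleftrightarrow>
     (\<forall>y. (1/2) * (norm (z - a))^2 + g z \<le> (1/2) * (norm (y - a))^2 + g y)"

lemma norm_convex_combination_diff_sq:
  fixes y z a :: "'a::real_inner"
  shows "(norm ((1 - s) *\<^sub>R y + s *\<^sub>R z - a))^2
    = (1 - s) * (norm (y - a))^2 + s * (norm (z - a))^2 - s * (1 - s) * (norm (y - z))^2"
proof -
  have "(1 - s) *\<^sub>R y + s *\<^sub>R z - a = (1 - s) *\<^sub>R (y - a) + s *\<^sub>R (z - a)"
    by (simp add: algebra_simps)
  moreover have "y - z = (y - a) - (z - a)"
    by simp
  ultimately show ?thesis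
    unfolding power2_norm_eq_inner
    by (simp add: inner_commute algebra_simps)
qed

lemma is_prox_quadratic_growth:
  assumes g: "convex_on UNIV g" and z: "is_prox g a z"
  shows "(1/2) * (norm (z - a))^2 + g z + (1/2) * (norm (y - z))^2
    \<le> (1/2) * (norm (y - a))^2 + g y"
proof -
  define \<phi> where "\<phi> y = (1/2) * (norm (y - a))^2 + g y" for y
  have bound: "\<phi> z \<le> \<phi> y - (1/2) * (1 - s) * (norm (y - z))^2" if s: "0 < s" "s < 1" for s
  proof -
    have "\<phi> z \<le> \<phi> ((1 - s) *\<^sub>R z + s *\<^sub>R y)"
      using z unfolding is_prox_def \<phi>_def by blast
    also have "\<dots> \<le> (1 - s) * \<phi> z + s * \<phi> y - (1/2) * s * (1 - s) * (norm (z - y))^2"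
    proof -
      have "g ((1 - s) *\<^sub>R z + s *\<^sub>R y) \<le> (1 - s) * g z + s * g y"
        using convex_onD[OF g, of s z y] s by simp
      moreover have "(1/2) * ((1 - s) * (norm (z - a))^2 + s * (norm (y - a))^2
            - s * (1 - s) * (norm (z - y))^2) + ((1 - s) * g z + s * g y)
          = (1 - s) * \<phi> z + s * \<phi> y - (1/2) * s * (1 - s) * (norm (z - y))^2"
        unfolding \<phi>_def by (simp add: field_simps)
      ultimately show ?thesis
        unfolding \<phi>_def norm_convex_combination_diff_sq by linarith
    qed
    finally have "s * \<phi> z \<le> s * (\<phi> y - (1/2) * (1 - s) * (norm (y - z))^2)"
      by (simp add: algebra_simps norm_minus_commute)
    then show ?thesis
      using s by simp
  qed
  have "((\<lambda>s. \<phi> y - (1/2) * (1 - s) * (norm (y - z))^2)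
      \<longlongrightarrow> \<phi> y - (1/2) * (1 - 0) * (norm (y - z))^2) (at_right 0)"
    by (intro tendsto_intros)
  moreover have "\<forall>\<^sub>F s in at_right 0. \<phi> z \<le> \<phi> y - (1/2) * (1 - s) * (norm (y - z))^2"
    unfolding eventually_at_right_field using bound by (intro exI[of _ 1]) auto
  ultimately have "\<phi> z \<le> \<phi> y - (1/2) * (1 - 0) * (norm (y - z))^2"
    by (rule tendsto_lowerbound) simp
  then show ?thesis
    unfolding \<phi>_def by simp
qed

lemma is_prox_unique:
  assumes "convex_on UNIV g" and "is_prox g a z" and "is_prox g a z'"
  shows "z' = z"
proof -
  have "(1/2) * (norm (z - a))^2 + g z + (1/2) * (norm (z' - z))^2
      \<le> (1/2) * (norm (z' - a))^2 + g z'"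
    using assms(1,2) by (rule is_prox_quadratic_growth)
  moreover have "(1/2) * (norm (z' - a))^2 + g z' \<le> (1/2) * (norm (z - a))^2 + g z"
    using assms(3) unfolding is_prox_def by blast
  ultimately have "(norm (z' - z))^2 \<le> 0"
    by linarith
  then show ?thesis
    by simp
qed

lemma is_prox_nonexpansive:
  assumes g: "convex_on UNIV g" and z1: "is_prox g a1 z1" and z2: "is_prox g a2 z2"
  shows "norm (z1 - z2) \<le> norm (a1 - a2)"
proof -
  have "(1/2) * (norm (z2 - a1))^2 - (1/2) * (norm (z1 - a1))^2
      + (1/2) * (norm (z1 - a2))^2 - (1/2) * (norm (z2 - a2))^2 = (z1 - z2) \<bullet> (a1 - a2)"
    unfolding power2_norm_eq_inner by (simp add: inner_commute algebra_simps)
  then have "(norm (z1 - z2))^2 \<le> (z1 - z2) \<bullet> (a1 - a2)"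
    using is_prox_quadratic_growth[OF g z1, of z2] is_prox_quadratic_growth[OF g z2, of z1]
    by (simp add: norm_minus_commute)
  also have "\<dots> \<le> norm (z1 - z2) * norm (a1 - a2)"
    by (rule norm_cauchy_schwarz)
  finally show ?thesis
    by (cases "z1 = z2") (auto simp: power2_eq_square)
qed

section \<open>Exact linearizations\<close>

definition exact_linearization_near ::
  "(real^'n \<Rightarrow> real^'m) \<Rightarrow> (real^'n \<Rightarrow> (real^'n^'m) set) \<Rightarrow> real^'n \<Rightarrow> bool" where
  "exact_linearization_near F J a \<longleftrightarrow>
     (\<forall>\<^sub>F a' in nhds a. \<forall>M\<in>J a'. F a' - F a = M *v (a' - a))"

lemma exact_linearization_near_if_shrinking:
  assumes "\<And>a M. M \<in> J a \<Longrightarrow> M *v a = F a" and "\<forall>\<^sub>F a' in nhds a. J a' \<subseteq> J a"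
  shows "exact_linearization_near F J a"
  unfolding exact_linearization_near_def
  using assms(2) by eventually_elim (use assms(1) in \<open>auto simp: matrix_vector_mult_diff_distrib\<close>)

lemma usc_multifun_if_shrinking:
  assumes "\<And>a. \<forall>\<^sub>F a' in nhds a. F a' \<subseteq> F a"
  shows "usc_multifun F"
  unfolding usc_multifun_def
proof (intro allI impI)
  fix a and U assume "open U \<and> F a \<subseteq> U"
  then show "\<exists>\<delta>>0. \<forall>a'. dist a' a < \<delta> \<longrightarrow> F a' \<subseteq> U"
    using assms[of a] unfolding eventually_nhds_metric by blast
qed

lemma strongly_semismooth_at_if_exact:
  assumes "dir_differentiable_at F a" and "exact_linearization_near F J a"
  shows "strongly_semismooth_at F J a"
proof -
  obtain \<delta> where "\<delta> > 0" and \<delta>: "\<And>a'. dist a' a < \<delta> \<Longrightarrow> \<forall>M\<in>J a'. F a' - F a = M *v (a' - a)"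
    using assms(2) unfolding exact_linearization_near_def eventually_nhds_metric by blast
  then have "\<forall>a'. norm (a' - a) < \<delta> \<longrightarrow> (\<forall>M\<in>J a'.
      norm (F a' - F a - M *v (a' - a)) \<le> 0 * (norm (a' - a))^2)"
    by (simp add: dist_norm)
  then show ?thesis
    unfolding strongly_semismooth_at_def using assms(1) \<open>\<delta> > 0\<close> by blast
qed

text \<open>Exactness at \<open>a\<close> and at \<open>a + \<sigma> d\<close>, applied to one \<open>M \<in> J (a + t d)\<close>, shows that the
  difference quotient takes the same value \<open>M d\<close> at \<open>\<sigma>\<close> and \<open>t\<close>; so it is locally constant,
  hence constant, on a small interval \<open>(0, \<epsilon>)\<close>.\<close>

lemma dir_differentiable_at_if_exact:
  fixes F :: "real^'n \<Rightarrow> real^'m"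
  assumes nonempty: "\<And>a. J a \<noteq> {}" and exact: "\<And>a. exact_linearization_near F J a"
  shows "dir_differentiable_at F a"
  unfolding dir_differentiable_at_def
proof
  fix d :: "real^'n"
  define \<gamma> where "\<gamma> t = a + t *\<^sub>R d" for t :: real
  define h where "h t = (1/t) *\<^sub>R (F (\<gamma> t) - F a)" for t
  have pullback: "\<forall>\<^sub>F s in nhds t. P (\<gamma> s)" if "\<forall>\<^sub>F x in nhds (\<gamma> t). P x" for P t
  proof -
    have "isCont \<gamma> t"
      unfolding \<gamma>_def by (intro continuous_intros)
    then have "filterlim \<gamma> (nhds (\<gamma> t)) (nhds t)"
      by (simp add: isCont_def tendsto_at_iff_tendsto_nhds)
    with that show ?thesis
      by (rule eventually_compose_filterlim)
  qed
  have exact_along: "\<forall>\<^sub>F s in nhds t. \<forall>M\<in>J (\<gamma> s). F (\<gamma> s) - F (\<gamma> t) = M *v (\<gamma> s - \<gamma> t)" for t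
    using exact[of "\<gamma> t"] unfolding exact_linearization_near_def by (rule pullback)
  have h_eq: "h \<sigma> = h t"
    if "\<sigma> \<noteq> 0" "t \<noteq> 0"
      and at_a: "\<forall>M\<in>J (\<gamma> t). F (\<gamma> t) - F (\<gamma> 0) = M *v (\<gamma> t - \<gamma> 0)"
      and at_\<sigma>: "\<forall>M\<in>J (\<gamma> t). F (\<gamma> t) - F (\<gamma> \<sigma>) = M *v (\<gamma> t - \<gamma> \<sigma>)" for \<sigma> t
  proof -
    obtain M where M: "M \<in> J (\<gamma> t)"
      using nonempty by blast
    have "F (\<gamma> t) - F a = t *\<^sub>R (M *v d)" and "F (\<gamma> t) - F (\<gamma> \<sigma>) = (t - \<sigma>) *\<^sub>R (M *v d)"
      using at_a[rule_format, OF M] at_\<sigma>[rule_format, OF M]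
      by (simp_all add: \<gamma>_def matrix_vector_mult_scaleR scaleR_diff_left[symmetric])
    then have "F (\<gamma> \<sigma>) - F a = \<sigma> *\<^sub>R (M *v d)"
      by (simp add: algebra_simps)
    then show ?thesis
      using \<open>F (\<gamma> t) - F a = t *\<^sub>R (M *v d)\<close> that(1,2) by (simp add: h_def)
  qed
  obtain \<epsilon> where "\<epsilon> > 0"
    and \<epsilon>: "\<And>s. dist s 0 < \<epsilon> \<Longrightarrow> \<forall>M\<in>J (\<gamma> s). F (\<gamma> s) - F (\<gamma> 0) = M *v (\<gamma> s - \<gamma> 0)"
    using exact_along[of 0] unfolding eventually_nhds_metric by blast
  have "h constant_on {0<..<\<epsilon>}"
  proof (rule locally_constant_imp_constant[OF connected_Ioo])
    fix \<sigma> :: real assume \<sigma>: "\<sigma> \<in> {0<..<\<epsilon>}"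
    obtain S where "open S" "\<sigma> \<in> S"
      and S: "\<And>s. s \<in> S \<Longrightarrow> \<forall>M\<in>J (\<gamma> s). F (\<gamma> s) - F (\<gamma> \<sigma>) = M *v (\<gamma> s - \<gamma> \<sigma>)"
      using exact_along[of \<sigma>] unfolding eventually_nhds by blast
    have "h s = h \<sigma>" if "s \<in> {0<..<\<epsilon>} \<inter> S" for s
    proof -
      have "dist s 0 < \<epsilon>" "s \<noteq> 0" "s \<in> S"
        using that by (auto simp: dist_real_def)
      then show ?thesis
        using h_eq[of \<sigma> s] \<sigma> S \<epsilon> by simp
    qed
    moreover have "openin (top_of_set {0<..<\<epsilon>}) ({0<..<\<epsilon>} \<inter> S)"
      using \<open>open S\<close> by (rule openin_open_Int)
    ultimately show "\<exists>T. openin (top_of_set {0<..<\<epsilon>}) T \<and> \<sigma> \<in> T \<and> (\<forall>s\<in>T. h s = h \<sigma>)"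
      using \<sigma> \<open>\<sigma> \<in> S\<close> by blast
  qed
  then obtain L where "\<forall>s\<in>{0<..<\<epsilon>}. h s = L"
    unfolding constant_on_def by blast
  then have "\<forall>\<^sub>F s in at_right 0. h s = L"
    unfolding eventually_at_right_field using \<open>\<epsilon> > 0\<close> by auto
  then have "(h \<longlongrightarrow> L) (at_right 0)"
    by (rule tendsto_eventually)
  then show "\<exists>L. ((\<lambda>\<tau>. (1/\<tau>) *\<^sub>R (F (a + \<tau> *\<^sub>R d) - F a)) \<longlongrightarrow> L) (at_right 0)"
    unfolding h_def \<gamma>_def by blast
qed

section \<open>Sign patterns\<close>

definition keeps_signs :: "real^'n \<Rightarrow> real^'n \<Rightarrow> bool" where
  "keeps_signs a a' \<longleftrightarrow> (\<forall>i. (0 < a$i \<longrightarrow> 0 < a'$i) \<and> (a$i < 0 \<longrightarrow> a'$i < 0))"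

lemma keeps_signs_nonzero: "keeps_signs a a' \<Longrightarrow> a$i \<noteq> 0 \<Longrightarrow> a'$i \<noteq> 0"
  unfolding keeps_signs_def by (metis less_irrefl linorder_neqE_linordered_idom)

lemma eventually_keeps_signs:
  fixes f :: "'a::t2_space \<Rightarrow> real^'n"
  assumes "isCont f a"
  shows "\<forall>\<^sub>F x in nhds a. keeps_signs (f a) (f x)"
proof -
  have "(f \<longlongrightarrow> f a) (nhds a)"
    using assms by (simp add: isCont_def tendsto_at_iff_tendsto_nhds)
  then have lim: "((\<lambda>x. f x $ i) \<longlongrightarrow> f a $ i) (nhds a)" for i
    by (rule tendsto_vec_nth)
  have "\<forall>\<^sub>F x in nhds a. (0 < f a $ i \<longrightarrow> 0 < f x $ i) \<and> (f a $ i < 0 \<longrightarrow> f x $ i < 0)" for i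
    using order_tendstoD[OF lim[of i]] by (cases "0 < f a $ i"; cases "f a $ i < 0") auto
  then show ?thesis
    unfolding keeps_signs_def by (rule eventually_all_finite)
qed

lemma SGN_subset_if_keeps_signs:
  assumes "keeps_signs a a'"
  shows "SGN a' \<subseteq> SGN a"
proof
  fix \<theta> assume \<theta>: "\<theta> \<in> SGN a'"
  have "(a$j \<noteq> 0 \<longrightarrow> \<theta>$j = sgn (a$j)) \<and> (a$j = 0 \<longrightarrow> -1 \<le> \<theta>$j \<and> \<theta>$j \<le> 1)" for j
  proof (cases "a$j = 0")
    case True
    then show ?thesis
      using \<theta> unfolding SGN_def by (cases "a'$j = 0") (auto simp: sgn_if)
  next
    case False
    then have "sgn (a'$j) = sgn (a$j)" and "a'$j \<noteq> 0"
      using assms[unfolded keeps_signs_def, rule_format, of j] by (auto simp: sgn_if)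
    then show ?thesis
      using \<theta> False unfolding SGN_def by auto
  qed
  then show "\<theta> \<in> SGN a"
    unfolding SGN_def by blast
qed

lemma SGN_eq_cbox:
  "SGN a = cbox (\<chi> j. if a$j = 0 then -1 else sgn (a$j)) (\<chi> j. if a$j = 0 then 1 else sgn (a$j))"
  unfolding SGN_def set_eq_iff by (auto simp: mem_box_cart) (meson order_antisym)+

lemma continuous_on_vabs: "continuous_on S vabs"
  unfolding vabs_def by (intro continuous_intros)

lemma inner_vabs_diff_le: "(vabs y - vabs a) \<bullet> (vabs y - vabs a) \<le> (y - a) \<bullet> (y - a)"
proof -
  have "(\<bar>y$j\<bar> - \<bar>a$j\<bar>)^2 \<le> (y$j - a$j)^2" for j
    by (metis abs_ge_zero abs_triangle_ineq3 power2_abs power_mono)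
  then show ?thesis
    unfolding inner_vec_def vabs_def by (simp add: sum_mono flip: power2_eq_square)
qed

lemma Diag_SGN_mult:
  assumes "\<theta> \<in> SGN a"
  shows "Diag \<theta> *v a = vabs a"
proof -
  have "\<theta>$i * a$i = \<bar>a$i\<bar>" for i
  proof -
    have "a$i \<noteq> 0 \<longrightarrow> \<theta>$i = sgn (a$i)"
      using assms unfolding SGN_def by blast
    then show ?thesis
      by (cases "a$i = 0") (auto simp: sgn_if)
  qed
  then show ?thesis
    unfolding Diag_mult vabs_def by simp
qed

section \<open>The nonnegative quadratic program and the proximal map\<close>

lemma Qmat_mult: "Qmat \<rho> w *v v = v + (2 * \<rho> * (w \<bullet> v)) *\<^sub>R w"
proof -
  have "(Qmat \<rho> w *v v) $ i = v $ i + 2 * \<rho> * (w \<bullet> v) * w $ i" for i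
  proof -
    have "(Qmat \<rho> w *v v) $ i
        = (\<Sum>j\<in>UNIV. (if i = j then v$j else 0) + 2 * \<rho> * w$i * (w$j * v$j))"
      by (simp add: Qmat_def matrix_vector_mult_def mat_def algebra_simps) (rule sum.cong, auto)
    also have "\<dots> = v $ i + 2 * \<rho> * w$i * (\<Sum>j\<in>UNIV. w$j * v$j)"
      by (simp add: sum.distrib sum_distrib_left)
    finally show ?thesis
      by (simp add: inner_vec_def)
  qed
  then show ?thesis
    by (simp add: vec_eq_iff)
qed

lemma transpose_Qmat: "transpose (Qmat \<rho> w) = Qmat \<rho> w"
  by (simp add: Qmat_def transpose_def mat_def vec_eq_iff mult.commute)

lemma inner_Qmat: "v \<bullet> (Qmat \<rho> w *v v) = v \<bullet> v + 2 * \<rho> * (w \<bullet> v)^2"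
  by (simp add: Qmat_mult inner_add_right power2_eq_square inner_commute)

lemma convex_on_weighted_l1: "convex_on UNIV (\<lambda>z::real^'n. \<Sum>i\<in>UNIV. \<bar>w$i * z$i\<bar>)"
proof
  fix t :: real and y z :: "real^'n" assume t: "0 < t" "t < 1"
  have "\<bar>w$i * ((1 - t) *\<^sub>R y + t *\<^sub>R z)$i\<bar> \<le> (1 - t) * \<bar>w$i * y$i\<bar> + t * \<bar>w$i * z$i\<bar>" for i
  proof -
    have "w$i * ((1 - t) *\<^sub>R y + t *\<^sub>R z)$i = (1 - t) * (w$i * y$i) + t * (w$i * z$i)"
      by (simp add: algebra_simps)
    also have "\<bar>\<dots>\<bar> \<le> \<bar>(1 - t) * (w$i * y$i)\<bar> + \<bar>t * (w$i * z$i)\<bar>"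
      by (rule abs_triangle_ineq)
    finally show ?thesis
      using t by (simp add: abs_mult)
  qed
  then have "(\<Sum>i\<in>UNIV. \<bar>w$i * ((1 - t) *\<^sub>R y + t *\<^sub>R z)$i\<bar>)
      \<le> (\<Sum>i\<in>UNIV. (1 - t) * \<bar>w$i * y$i\<bar> + t * \<bar>w$i * z$i\<bar>)"
    by (rule sum_mono)
  also have "\<dots> = (1 - t) * (\<Sum>i\<in>UNIV. \<bar>w$i * y$i\<bar>) + t * (\<Sum>i\<in>UNIV. \<bar>w$i * z$i\<bar>)"
    by (simp add: sum.distrib sum_distrib_left)
  finally show "(\<Sum>i\<in>UNIV. \<bar>w$i * ((1 - t) *\<^sub>R y + t *\<^sub>R z)$i\<bar>)
      \<le> (1 - t) * (\<Sum>i\<in>UNIV. \<bar>w$i * y$i\<bar>) + t * (\<Sum>i\<in>UNIV. \<bar>w$i * z$i\<bar>)" .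
qed simp

lemma convex_on_wl1sq: "convex_on UNIV (wl1sq w)"
  unfolding wl1sq_def[abs_def]
  by (rule convex_on_power2[OF convex_on_weighted_l1]) (simp add: sum_nonneg)

locale weighted_l1sq =
  fixes \<rho> :: real and w :: "real^'n"
  assumes weights_nonneg: "\<And>i. 0 \<le> w$i" and rho_nonneg: "0 \<le> \<rho>"
begin

lemma inner_le_inner_Qmat: "v \<bullet> v \<le> v \<bullet> (Qmat \<rho> w *v v)"
  using rho_nonneg by (simp add: inner_Qmat)

lemma positive_definite_Qmat: "positive_definite (Qmat \<rho> w)"
  unfolding positive_definite_def
  using transpose_Qmat inner_le_inner_Qmat by (metis inner_gt_zero_iff order_less_le_trans)

lemma positive_definite_Qinv: "positive_definite (Qinv \<rho> w)"
  unfolding Qinv_def using positive_definite_Qmat by (rule positive_definite_matrix_inv)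

lemma Qinv_Qmat: "Qinv \<rho> w *v (Qmat \<rho> w *v v) = v"
  unfolding Qinv_def
  by (rule matrix_inv_cancel_left[OF positive_definite_kernel[OF positive_definite_Qmat]])

lemma Qmat_Qinv: "Qmat \<rho> w *v (Qinv \<rho> w *v v) = v"
  unfolding Qinv_def
  by (rule matrix_inv_cancel_right[OF positive_definite_kernel[OF positive_definite_Qmat]])

definition kkt :: "real^'n \<Rightarrow> real^'n \<Rightarrow> bool" where
  "kkt b x \<longleftrightarrow> (\<forall>i. 0 \<le> x$i) \<and> (\<forall>i. (b - Qmat \<rho> w *v x)$i \<le> 0)
     \<and> (\<forall>i. (b - Qmat \<rho> w *v x)$i * x$i = 0)"

text \<open>With \<open>s = w \<bullet> x\<close> the KKT system forces \<open>x = max (b - 2 \<rho> s w) 0\<close>, so it reduces to the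
  scalar equation \<open>s = (\<Sum>i. w\<^sub>i max (b\<^sub>i - 2 \<rho> s w\<^sub>i) 0)\<close>, which the intermediate value theorem
  solves on \<open>[0, \<Sum>i. w\<^sub>i max b\<^sub>i 0]\<close>.\<close>

lemma kkt_exists: "\<exists>x. kkt b x"
proof -
  define g where "g s = (\<Sum>i\<in>UNIV. w$i * max (b$i - 2 * \<rho> * w$i * s) 0) - s" for s
  define s0 where "s0 = (\<Sum>i\<in>UNIV. w$i * max (b$i) 0)"
  have "0 \<le> s0"
    unfolding s0_def using weights_nonneg by (simp add: sum_nonneg)
  have "0 \<le> g 0"
    unfolding g_def using weights_nonneg by (simp add: sum_nonneg)
  have "w$i * max (b$i - 2 * \<rho> * w$i * s0) 0 \<le> w$i * max (b$i) 0" for i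
    using weights_nonneg[of i] rho_nonneg \<open>0 \<le> s0\<close>
    by (intro mult_left_mono max.mono) auto
  then have "(\<Sum>i\<in>UNIV. w$i * max (b$i - 2 * \<rho> * w$i * s0) 0) \<le> s0"
    unfolding s0_def by (rule sum_mono)
  then have "g s0 \<le> 0"
    unfolding g_def by simp
  moreover have "isCont g s" for s
    unfolding g_def by (intro continuous_intros)
  ultimately obtain s where "0 \<le> s" "g s = 0"
    using IVT2[of g s0 0 0] \<open>0 \<le> g 0\<close> \<open>0 \<le> s0\<close> by auto
  define x where "x = (\<chi> i. max (b$i - 2 * \<rho> * w$i * s) 0)"
  have "w \<bullet> x = s"
    using \<open>g s = 0\<close> unfolding g_def x_def inner_vec_def by simp
  then have \<mu>: "(b - Qmat \<rho> w *v x)$i = b$i - x$i - 2 * \<rho> * w$i * s" for i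
    by (simp add: Qmat_mult algebra_simps)
  have "0 \<le> x$i \<and> b$i - x$i - 2 * \<rho> * w$i * s \<le> 0 \<and> (b$i - x$i - 2 * \<rho> * w$i * s) * x$i = 0"
    for i by (simp add: x_def max_def)
  then have "kkt b x"
    unfolding kkt_def \<mu> by blast
  then show ?thesis ..
qed

lemma kkt_quadratic_growth:
  assumes "kkt b x" and "\<forall>i. 0 \<le> y$i"
  shows "qobj \<rho> w b x + (1/2) * ((y - x) \<bullet> (y - x)) \<le> qobj \<rho> w b y"
proof -
  define d where "d = y - x"
  define \<mu> where "\<mu> = b - Qmat \<rho> w *v x"
  have sym: "x \<bullet> (Qmat \<rho> w *v d) = (Qmat \<rho> w *v x) \<bullet> d"
    by (simp add: inner_matrix_vector_sym transpose_Qmat)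
  have y: "y = x + d"
    by (simp add: d_def)
  have expand: "qobj \<rho> w b y = qobj \<rho> w b x + ((1/2) * (d \<bullet> (Qmat \<rho> w *v d)) - d \<bullet> \<mu>)"
    unfolding qobj_def \<mu>_def y using sym
    by (simp add: inner_commute algebra_simps)
  have "\<forall>i. x$i * \<mu>$i = 0"
    using assms(1) unfolding kkt_def \<mu>_def by (metis mult.commute)
  then have "x \<bullet> \<mu> = 0"
    unfolding inner_vec_def by (simp add: sum.neutral)
  moreover have "y \<bullet> \<mu> \<le> 0"
    using assms unfolding kkt_def \<mu>_def inner_vec_def
    by (intro sum_nonpos) (simp add: mult_nonneg_nonpos)
  ultimately have "d \<bullet> \<mu> \<le> 0"
    by (simp add: d_def inner_diff_left)
  then show ?thesis
    using inner_le_inner_Qmat[of d] unfolding expand d_def by simp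
qed

lemma xsol_eq_if_kkt:
  assumes "kkt b x"
  shows "xsol \<rho> w b = x"
  unfolding xsol_def
proof (rule the_equality)
  have "qobj \<rho> w b x \<le> qobj \<rho> w b y" if "\<forall>i. 0 \<le> y$i" for y
    using kkt_quadratic_growth[OF assms that] inner_ge_zero[of "y - x"] by linarith
  then show "(\<forall>i. 0 \<le> x$i) \<and> (\<forall>y. (\<forall>i. 0 \<le> y$i) \<longrightarrow> qobj \<rho> w b x \<le> qobj \<rho> w b y)"
    using assms unfolding kkt_def by blast
next
  fix y assume y: "(\<forall>i. 0 \<le> y$i) \<and> (\<forall>z. (\<forall>i. 0 \<le> z$i) \<longrightarrow> qobj \<rho> w b y \<le> qobj \<rho> w b z)"
  then have "qobj \<rho> w b y \<le> qobj \<rho> w b x"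
    using assms unfolding kkt_def by blast
  then have "(y - x) \<bullet> (y - x) \<le> 0"
    using kkt_quadratic_growth[OF assms, of y] y by simp
  then have "y - x = 0"
    by (metis inner_gt_zero_iff not_le)
  then show "y = x"
    by simp
qed

lemma kkt_xsol: "kkt b (xsol \<rho> w b)"
  using kkt_exists xsol_eq_if_kkt by metis

lemma xsol_nonneg: "0 \<le> xsol \<rho> w b $ i"
  using kkt_xsol unfolding kkt_def by blast

lemma musol_eq: "musol \<rho> w b = b - Qmat \<rho> w *v xsol \<rho> w b"
  unfolding musol_def
proof (rule the_equality)
  show "Qmat \<rho> w *v xsol \<rho> w b - b + (b - Qmat \<rho> w *v xsol \<rho> w b) = 0
      \<and> (\<forall>i. (b - Qmat \<rho> w *v xsol \<rho> w b)$i * xsol \<rho> w b $ i = 0)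
      \<and> (\<forall>i. (b - Qmat \<rho> w *v xsol \<rho> w b)$i \<le> 0)"
    using kkt_xsol[of b] unfolding kkt_def by simp
qed (simp add: algebra_simps eq_neg_iff_add_eq_0[symmetric])

lemma musol_xsol_complementary: "musol \<rho> w b $ i * xsol \<rho> w b $ i = 0"
  using kkt_xsol[of b] unfolding kkt_def musol_eq by blast

lemma xsol_eq_0_if_nonpos:
  assumes "b$j \<le> 0"
  shows "xsol \<rho> w b $ j = 0"
proof (rule ccontr)
  let ?x = "xsol \<rho> w b"
  assume "?x $ j \<noteq> 0"
  then have "0 < ?x $ j"
    using xsol_nonneg[of b j] by simp
  moreover have "0 \<le> w \<bullet> ?x"
    unfolding inner_vec_def using weights_nonneg xsol_nonneg by (simp add: sum_nonneg)
  ultimately have "0 < (Qmat \<rho> w *v ?x) $ j"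
    using weights_nonneg[of j] rho_nonneg by (simp add: Qmat_mult add_pos_nonneg)
  moreover have "(b - Qmat \<rho> w *v ?x)$j * ?x $ j = 0"
    using kkt_xsol[of b] unfolding kkt_def by blast
  then have "(b - Qmat \<rho> w *v ?x)$j = 0"
    using \<open>0 < ?x $ j\<close> by simp
  ultimately show False
    using assms by simp
qed

lemma convex_on_rho_wl1sq: "convex_on UNIV (\<lambda>z. \<rho> * wl1sq w z)"
  using rho_nonneg convex_on_wl1sq by (rule convex_on_cmul)

lemma prox_eqI:
  assumes "is_prox (\<lambda>z. \<rho> * wl1sq w z) a z"
  shows "prox \<rho> w a = z"
proof -
  have "prox \<rho> w a = (THE z. is_prox (\<lambda>z. \<rho> * wl1sq w z) a z)"
    unfolding prox_def is_prox_def ..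
  also have "\<dots> = z"
    using assms is_prox_unique[OF convex_on_rho_wl1sq assms] by (rule the_equality)
  finally show ?thesis .
qed

lemma wl1sq_eq_inner_vabs: "wl1sq w y = (w \<bullet> vabs y)^2"
  unfolding wl1sq_def inner_vec_def vabs_def using weights_nonneg by (simp add: abs_mult)

lemma qobj_completed_square:
  "(1/2) * ((u - b) \<bullet> (u - b)) + \<rho> * (w \<bullet> u)^2 = qobj \<rho> w b u + (1/2) * (b \<bullet> b)"
  unfolding qobj_def inner_Qmat inner_diff_left inner_diff_right
  by (simp add: inner_commute field_simps)

lemma xsol_vabs_eq_0: "a$j = 0 \<Longrightarrow> xsol \<rho> w (vabs a) $ j = 0"
  by (rule xsol_eq_0_if_nonpos) (simp add: vabs_def)

text \<open>Flipping signs reduces the prox to the nonnegative QP: \<open>\<parallel>y - a\<parallel> \<ge> \<parallel>\<bar>y\<bar> - \<bar>a\<bar>\<parallel>\<close>, with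
  equality at the candidate, while the penalty only depends on \<open>\<bar>y\<bar>\<close>.\<close>

lemma is_prox_signed_xsol:
  "is_prox (\<lambda>z. \<rho> * wl1sq w z) a (\<chi> j. sgn (a$j) * xsol \<rho> w (vabs a) $ j)"
  unfolding is_prox_def
proof
  fix y
  define b where "b = vabs a"
  define x where "x = xsol \<rho> w b"
  define z where "z = (\<chi> j. sgn (a$j) * x$j)"
  have x0: "x$j = 0" if "a$j = 0" for j
    unfolding x_def b_def using that by (rule xsol_vabs_eq_0)
  have "(z$j - a$j)^2 = (x$j - b$j)^2" for j
    using x0[of j] unfolding z_def b_def vabs_def
    by (cases "a$j > 0"; cases "a$j < 0") (auto simp: power2_eq_square algebra_simps)
  then have "(norm (z - a))^2 = (x - b) \<bullet> (x - b)"
    unfolding power2_norm_eq_inner inner_vec_def by (simp add: power2_eq_square)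
  moreover have "vabs z = x"
    using x0 xsol_nonneg unfolding vabs_def z_def x_def vec_eq_iff by (auto simp: abs_mult sgn_if)
  ultimately have z_val:
    "(1/2) * (norm (z - a))^2 + \<rho> * wl1sq w z = qobj \<rho> w b x + (1/2) * (b \<bullet> b)"
    using qobj_completed_square[of x b] by (simp add: wl1sq_eq_inner_vabs)
  have "(vabs y - b) \<bullet> (vabs y - b) \<le> (y - a) \<bullet> (y - a)"
    unfolding b_def by (rule inner_vabs_diff_le)
  then have "qobj \<rho> w b (vabs y) + (1/2) * (b \<bullet> b) \<le> (1/2) * (norm (y - a))^2 + \<rho> * wl1sq w y"
    using qobj_completed_square[of "vabs y" b]
    by (simp add: wl1sq_eq_inner_vabs power2_norm_eq_inner)
  moreover have "qobj \<rho> w b x \<le> qobj \<rho> w b (vabs y)"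
  proof -
    have "\<forall>i. 0 \<le> vabs y $ i"
      by (simp add: vabs_def)
    from kkt_quadratic_growth[OF kkt_xsol[of b] this] show ?thesis
      using inner_ge_zero[of "vabs y - x"] unfolding x_def by linarith
  qed
  ultimately show "(1/2) * (norm (z - a))^2 + \<rho> * wl1sq w z
      \<le> (1/2) * (norm (y - a))^2 + \<rho> * wl1sq w y"
    unfolding z_val by linarith
qed

lemma prox_eq: "prox \<rho> w a = (\<chi> j. sgn (a$j) * xsol \<rho> w (vabs a) $ j)"
  by (rule prox_eqI[OF is_prox_signed_xsol])

lemma prox_nonexpansive: "norm (prox \<rho> w a1 - prox \<rho> w a2) \<le> norm (a1 - a2)"
  unfolding prox_eq
  by (rule is_prox_nonexpansive[OF convex_on_rho_wl1sq is_prox_signed_xsol is_prox_signed_xsol])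

lemma locally_lipschitz_prox: "locally_lipschitz (prox \<rho> w)"
  unfolding locally_lipschitz_def using prox_nonexpansive by (metis mult_1 zero_less_one)

lemma xsol_eq_prox:
  assumes "\<And>j. 0 \<le> b$j"
  shows "xsol \<rho> w b = prox \<rho> w b"
proof -
  have "vabs b = b"
    using assms unfolding vabs_def vec_eq_iff by simp
  have "xsol \<rho> w b $ j = sgn (b$j) * xsol \<rho> w b $ j" for j
    using assms[of j] xsol_eq_0_if_nonpos[of b j] by (cases "b$j = 0") auto
  then show ?thesis
    unfolding prox_eq \<open>vabs b = b\<close> by (simp only: vec_eq_iff vec_lambda_beta) simp
qed

lemma continuous_on_xsol_vabs: "continuous_on UNIV (\<lambda>a. xsol \<rho> w (vabs a))"
proof -
  have "(\<lambda>a. xsol \<rho> w (vabs a)) = prox \<rho> w \<circ> vabs"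
    by (simp add: xsol_eq_prox vabs_def fun_eq_iff)
  moreover have "continuous_on UNIV (prox \<rho> w)"
    by (rule lipschitz_on_continuous_on[of 1])
      (rule lipschitz_onI, auto simp: dist_norm prox_nonexpansive)
  ultimately show ?thesis
    by (metis continuous_on_compose continuous_on_subset continuous_on_vabs subset_UNIV)
qed

lemma continuous_on_musol_vabs: "continuous_on UNIV (\<lambda>a. musol \<rho> w (vabs a))"
  unfolding musol_eq
  by (intro continuous_intros continuous_on_vabs continuous_on_xsol_vabs
      bounded_linear.continuous_on[OF matrix_vector_mul_bounded_linear])

end

section \<open>The multifunction \<open>dHS\<close>\<close>

context weighted_l1sq
begin

lemma xsol_eq_Qinv_mult:
  assumes "\<And>i. 0 \<le> (Qinv \<rho> w *v b)$i"
  shows "xsol \<rho> w b = Qinv \<rho> w *v b"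
  by (rule xsol_eq_if_kkt) (use assms in \<open>simp add: kkt_def Qmat_Qinv\<close>)

lemma schur_compl_Qinv_mult:
  assumes "K \<in> Kfam \<rho> w b"
  shows "schur_compl K (Qinv \<rho> w) *v b = xsol \<rho> w b"
proof -
  let ?Qi = "Qinv \<rho> w" and ?S = "selK K"
  define x where "x = xsol \<rho> w b"
  define \<mu> where "\<mu> = musol \<rho> w b"
  have "?S *v \<mu> = \<mu>" and "?S *v x = 0"
    using assms unfolding Kfam_def Iset_def selK_mult vec_eq_iff x_def \<mu>_def by auto
  moreover have Qi_b: "?Qi *v b = x + ?Qi *v \<mu>"
  proof -
    have "b = Qmat \<rho> w *v x + \<mu>"
      unfolding x_def \<mu>_def musol_eq by simp
    then show ?thesis
      by (metis Qinv_Qmat matrix_vector_right_distrib)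
  qed
  ultimately have "padinv K ?Qi *v (?Qi *v b) = \<mu>"
    by (intro padinv_unique[OF positive_definite_Qinv])
      (simp_all add: matrix_vector_right_distrib)
  then show ?thesis
    using Qi_b by (simp add: schur_compl_mult x_def)
qed

lemma hatHS_cases:
  assumes "P \<in> hatHS \<rho> w b"
  obtains "P = Qinv \<rho> w" and "\<And>i. 0 \<le> (Qinv \<rho> w *v b)$i"
    | K where "K \<in> Kfam \<rho> w b" and "P = schur_compl K (Qinv \<rho> w)"
  using assms unfolding hatHS_def Let_def schur_compl_def
  by (auto split: if_splits simp: less_imp_le not_less)

lemma hatHS_mult_eq_xsol: "P \<in> hatHS \<rho> w b \<Longrightarrow> P *v b = xsol \<rho> w b"
  by (elim hatHS_cases) (simp_all add: xsol_eq_Qinv_mult schur_compl_Qinv_mult)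

lemma transpose_hatHS: "P \<in> hatHS \<rho> w b \<Longrightarrow> transpose P = P"
  using positive_definite_Qinv
  by (elim hatHS_cases) (simp_all add: positive_definite_def transpose_schur_compl)

lemma hatHS_psd: "P \<in> hatHS \<rho> w b \<Longrightarrow> 0 \<le> v \<bullet> (P *v v)"
  using positive_definite_Qinv
  by (elim hatHS_cases) (simp_all add: positive_definite_psd schur_compl_psd)

lemma hatHS_nonempty: "hatHS \<rho> w b \<noteq> {}"
proof -
  have "{i. musol \<rho> w b $ i \<noteq> 0} \<in> Kfam \<rho> w b"
    using musol_xsol_complementary unfolding Kfam_def Iset_def by auto
  then show ?thesis
    unfolding hatHS_def Let_def by auto
qed

lemma finite_hatHS: "finite (hatHS \<rho> w b)"
proof (rule finite_subset)
  show "hatHS \<rho> w b \<subseteq> insert (Qinv \<rho> w) (range (\<lambda>K. schur_compl K (Qinv \<rho> w)))"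
    unfolding hatHS_def Let_def schur_compl_def by auto
qed simp

lemma Kfam_subset_if_keeps_signs:
  assumes "keeps_signs (xsol \<rho> w b) (xsol \<rho> w b')"
    and "keeps_signs (musol \<rho> w b) (musol \<rho> w b')"
  shows "Kfam \<rho> w b' \<subseteq> Kfam \<rho> w b"
  using keeps_signs_nonzero[OF assms(1)] keeps_signs_nonzero[OF assms(2)]
  unfolding Kfam_def Iset_def by blast

lemma hatHS_subset_if_keeps_signs:
  assumes "Kfam \<rho> w b' \<subseteq> Kfam \<rho> w b"
    and "keeps_signs (Qinv \<rho> w *v b) (Qinv \<rho> w *v b')"
  shows "hatHS \<rho> w b' \<subseteq> hatHS \<rho> w b"
  using assms unfolding hatHS_def Let_def keeps_signs_def
  by (auto split: if_splits) (meson less_asym)+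

lemma Diag_SGN_xsol_vabs:
  assumes "\<theta> \<in> SGN a"
  shows "Diag \<theta> *v xsol \<rho> w (vabs a) = prox \<rho> w a"
proof -
  have "\<theta>$j * xsol \<rho> w (vabs a) $ j = sgn (a$j) * xsol \<rho> w (vabs a) $ j" for j
    using assms xsol_vabs_eq_0[of a j] unfolding SGN_def by (cases "a$j = 0") auto
  then show ?thesis
    unfolding Diag_mult prox_eq by (simp only: vec_eq_iff vec_lambda_beta) simp
qed

lemma dHS_mult_eq_prox:
  assumes "M \<in> dHS \<rho> w a"
  shows "M *v a = prox \<rho> w a"
proof -
  obtain \<theta> P where "\<theta> \<in> SGN a" "P \<in> hatHS \<rho> w (vabs a)" "M = Diag \<theta> ** P ** Diag \<theta>"
    using assms unfolding dHS_def by blast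
  then show ?thesis
    by (simp add: Diag_SGN_mult hatHS_mult_eq_xsol Diag_SGN_xsol_vabs
        flip: matrix_vector_mul_assoc)
qed

lemma transpose_dHS: "M \<in> dHS \<rho> w a \<Longrightarrow> transpose M = M"
  unfolding dHS_def
  by (auto simp: matrix_transpose_mul transpose_hatHS matrix_mul_assoc)

lemma dHS_psd:
  assumes "M \<in> dHS \<rho> w a"
  shows "0 \<le> v \<bullet> (M *v v)"
proof -
  obtain \<theta> P where "P \<in> hatHS \<rho> w (vabs a)" "M = Diag \<theta> ** P ** Diag \<theta>"
    using assms unfolding dHS_def by blast
  moreover have "v \<bullet> (Diag \<theta> *v u) = (Diag \<theta> *v v) \<bullet> u" for u
    by (simp add: inner_matrix_vector_sym)
  ultimately show ?thesis
    by (simp add: hatHS_psd flip: matrix_vector_mul_assoc)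
qed

lemma dHS_nonempty: "dHS \<rho> w a \<noteq> {}"
proof -
  obtain P where "P \<in> hatHS \<rho> w (vabs a)"
    using hatHS_nonempty by blast
  moreover have "(\<chi> j. sgn (a$j)) \<in> SGN a"
    unfolding SGN_def by (auto simp: sgn_if)
  ultimately show ?thesis
    unfolding dHS_def by blast
qed

lemma compact_dHS: "compact (dHS \<rho> w a)"
proof -
  have "dHS \<rho> w a = (\<Union>P\<in>hatHS \<rho> w (vabs a). (\<lambda>\<theta>. Diag \<theta> ** P ** Diag \<theta>) ` SGN a)"
    unfolding dHS_def by auto
  moreover have "compact ((\<lambda>\<theta>. Diag \<theta> ** P ** Diag \<theta>) ` SGN a)" for P
  proof (rule compact_continuous_image)
    have entries: "(\<lambda>\<theta>. Diag \<theta> ** P ** Diag \<theta>) = (\<lambda>\<theta>. \<chi> i j. \<theta>$i * P$i$j * \<theta>$j)"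
      by (simp add: Diag_def matrix_matrix_mult_def vec_eq_iff fun_eq_iff if_distrib if_distribR
          cong: if_cong)
    show "continuous_on (SGN a) (\<lambda>\<theta>. Diag \<theta> ** P ** Diag \<theta>)"
      unfolding entries by (intro continuous_intros)
    show "compact (SGN a)"
      unfolding SGN_eq_cbox by (rule compact_cbox)
  qed
  ultimately show ?thesis
    by (simp add: compact_UN finite_hatHS)
qed

lemma dHS_locally_shrinking: "\<forall>\<^sub>F a' in nhds a. dHS \<rho> w a' \<subseteq> dHS \<rho> w a"
proof -
  have cont: "isCont f a" if "continuous_on UNIV f" for f :: "real^'n \<Rightarrow> real^'n"
    using that continuous_on_eq_continuous_at[OF open_UNIV] by blast
  have Qinv_vabs: "continuous_on UNIV (\<lambda>a. Qinv \<rho> w *v vabs a)"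
    by (intro continuous_on_vabs bounded_linear.continuous_on[OF matrix_vector_mul_bounded_linear])
  show ?thesis
    using eventually_keeps_signs[OF continuous_ident]
      eventually_keeps_signs[OF cont[OF continuous_on_xsol_vabs]]
      eventually_keeps_signs[OF cont[OF continuous_on_musol_vabs]]
      eventually_keeps_signs[OF cont[OF Qinv_vabs]]
  proof eventually_elim
    case (elim a')
    then have "SGN a' \<subseteq> SGN a" and "hatHS \<rho> w (vabs a') \<subseteq> hatHS \<rho> w (vabs a)"
      by (simp_all add: SGN_subset_if_keeps_signs hatHS_subset_if_keeps_signs
          Kfam_subset_if_keeps_signs)
    then show ?case
      unfolding dHS_def by blast
  qed
qed

end

theorem proposition3p4:
  fixes w :: "real^'n" and \<rho> :: real
  assumes "\<forall>i. w$i > 0" and "\<rho> > 0"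
  shows "(\<forall>a. dHS \<rho> w a \<noteq> {}) \<and> (\<forall>a. compact (dHS \<rho> w a)) \<and> usc_multifun (dHS \<rho> w)
    \<and> (\<forall>a. \<forall>M\<in>dHS \<rho> w a. transpose M = M \<and> (\<forall>v. 0 \<le> v \<bullet> (M *v v)))
    \<and> strongly_semismooth (prox \<rho> w) (dHS \<rho> w)"
proof -
  interpret weighted_l1sq \<rho> w
    using assms by unfold_locales (auto simp: less_imp_le)
  have exact: "exact_linearization_near (prox \<rho> w) (dHS \<rho> w) a" for a
    using dHS_mult_eq_prox dHS_locally_shrinking by (rule exact_linearization_near_if_shrinking)
  have "strongly_semismooth (prox \<rho> w) (dHS \<rho> w)"
    unfolding strongly_semismooth_def
    using locally_lipschitz_prox dir_differentiable_at_if_exact[OF dHS_nonempty exact]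
      strongly_semismooth_at_if_exact exact by blast
  then show ?thesis
    using dHS_nonempty compact_dHS usc_multifun_if_shrinking[OF dHS_locally_shrinking]
      transpose_dHS dHS_psd by blast
qed

end
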